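(* Let $Q$ be a convex polygon with finitely many sides and perimeter $L$. Parametrize its boundary by arc length $s$, let $P(s)$ be the boundary point at parameter $s$ and $P'(s)=P(s+L/2)$ its antipodal point, and let $\alpha(s)$ be the area of the part of $Q$ to the left of the directed line $P(s)P'(s)$ minus the area of the part to its right. Then the set of zeros of $\alpha$ (in one period of $s$) is a finite union of points and closed intervals. *)

theory Defs
  imports "HOL-Analysis.Analysis"
begin

text \<open>Planar points are vectors in real^2.  cross u w is the z-component of
the cross product; cross u w > 0 means w lies strictly to the left of u.\<close>
definition cross :: "real^2 \<Rightarrow> real^2 \<Rightarrow> real" where
  "cross u w = u$1 * w$2 - u$2 * w$1"

text \<open>A convex polygon is given by its list of vertices, listed
counterclockwise, in strictly convex position (every other vertex lies
strictly to the left of each directed edge).\<close>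
definition vtx :: "(real^2) list \<Rightarrow> nat \<Rightarrow> real^2" where
  "vtx vs i = vs ! (i mod length vs)"

definition convex_polygon_vertices :: "(real^2) list \<Rightarrow> bool" where
  "convex_polygon_vertices vs \<longleftrightarrow> length vs \<ge> 3 \<and>
     (\<forall>i < length vs. \<forall>j < length vs. j \<noteq> i \<and> j \<noteq> Suc i mod length vs \<longrightarrow>
        cross (vtx vs (Suc i) - vtx vs i) (vtx vs j - vtx vs i) > 0)"

definition polygon :: "(real^2) list \<Rightarrow> (real^2) set" where
  "polygon vs = convex hull (set vs)"

definition edge_len :: "(real^2) list \<Rightarrow> nat \<Rightarrow> real" where
  "edge_len vs i = norm (vtx vs (Suc i) - vtx vs i)"

definition cum_len :: "(real^2) list \<Rightarrow> nat \<Rightarrow> real" where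
  "cum_len vs k = (\<Sum>i<k. edge_len vs i)"

definition perimeter :: "(real^2) list \<Rightarrow> real" where
  "perimeter vs = cum_len vs (length vs)"

text \<open>Arc-length parametrization of the boundary, starting at vertex 0,
counterclockwise, extended L-periodically to all of the reals.\<close>
definition bdry_point :: "(real^2) list \<Rightarrow> real \<Rightarrow> real^2" where
  "bdry_point vs s =
     (let L = perimeter vs;
          t = s - L * of_int \<lfloor>s / L\<rfloor>;
          k = (GREATEST k. k < length vs \<and> cum_len vs k \<le> t)
      in vtx vs k + ((t - cum_len vs k) / edge_len vs k) *\<^sub>R (vtx vs (Suc k) - vtx vs k))"

text \<open>The arc-length
parameter may start at an arbitrary boundary point (offset s0).\<close>
definition area_diff :: "(real^2) list \<Rightarrow> real \<Rightarrow> real \<Rightarrow> real" where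
  "area_diff vs s0 s =
     (let L = perimeter vs;
          P = bdry_point vs (s0 + s);
          P' = bdry_point vs (s0 + s + L / 2)
      in measure lebesgue (polygon vs \<inter> {x. cross (P' - P) (x - P) > 0})
       - measure lebesgue (polygon vs \<inter> {x. cross (P' - P) (x - P) < 0}))"

end

theory Submission
  imports Defs
begin

text \<open>
  Let the chord run from P on edge K to P' on edge J of the counterclockwise polygon. The
  part of Q to the right of the chord is covered by the triangles of the fan from P over
  the vertices met on the way from P to P', and the left part by the fan from P' over
  the remaining vertices. Together these two fans have exactly the shoelace area of Q,
  which in turn is at most the area of Q; hence both coverings are tight, and alpha is
  half the shoelace sum of Q minus the shoelace sum of the right-hand polygon.

  While neither P nor P' passes a vertex, both move affinely with the arc length s, so
  alpha is either identically zero there (if P = P') or a polynomial of degree at most two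
  in s. The finitely many parameters at which P or P' is a vertex cut the period into
  intervals on each of which the zero set is either finite or the whole interval.
\<close>

subsection \<open>The planar cross product\<close>

lemma cross_add_left [simp]: "cross (a + b) w = cross a w + cross b w"
  by (simp add: cross_def algebra_simps)

lemma cross_add_right [simp]: "cross w (a + b) = cross w a + cross w b"
  by (simp add: cross_def algebra_simps)

lemma cross_diff_left [simp]: "cross (a - b) w = cross a w - cross b w"
  by (simp add: cross_def algebra_simps)

lemma cross_diff_right [simp]: "cross w (a - b) = cross w a - cross w b"
  by (simp add: cross_def algebra_simps)

lemma cross_scaleR_left [simp]: "cross (c *\<^sub>R a) w = c * cross a w"
  by (simp add: cross_def algebra_simps)

lemma cross_scaleR_right [simp]: "cross w (c *\<^sub>R a) = c * cross w a"
  by (simp add: cross_def algebra_simps)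

lemma cross_self [simp]: "cross a a = 0"
  by (simp add: cross_def algebra_simps)

lemma cross_zero_left [simp]: "cross 0 a = 0"
  and cross_zero_right [simp]: "cross a 0 = 0"
  by (simp_all add: cross_def)

lemma cross_antisym: "cross a b = - cross b a"
  by (simp add: cross_def algebra_simps)

lemma cross_plucker: "cross u y * cross x z = cross u x * cross y z + cross u z * cross x y"
  by (simp add: cross_def algebra_simps)

lemma sum_cross_translate:
  "(\<Sum>t\<le>d. cross (q t - z) (q (Suc t) - z))
     = (\<Sum>t\<le>d. cross (q t) (q (Suc t))) - cross (q 0) z + cross (q (Suc d)) z"
  by (induction d) (simp_all add: cross_def algebra_simps)

lemma cross_eq_inner: "cross w x = (\<chi> i. if i = 1 then - w$2 else w$1) \<bullet> x"
  by (simp add: cross_def inner_vec_def sum_2)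

lemma convex_cross_halfplane: "convex {x. 0 \<le> cross w (x - v)}"
proof -
  have "{x. 0 \<le> cross w (x - v)} = {x. cross w v \<le> (\<chi> i. if i = 1 then - w$2 else w$1) \<bullet> x}"
    by (auto simp: cross_eq_inner[symmetric])
  then show ?thesis by (simp add: convex_halfspace_ge)
qed

lemma open_cross_less: "open {x. cross w (x - P) < c}"
  unfolding cross_def by (intro open_Collect_less continuous_intros)

lemma open_cross_greater: "open {x. cross w (x - P) > c}"
  unfolding cross_def by (intro open_Collect_less continuous_intros)

lemma negligible_cross_line:
  assumes "w \<noteq> 0" shows "negligible {x. cross w (x - P) = 0}"
proof -
  let ?n = "\<chi> i::2. if i = 1 then - w$2 else w$1"
  have "?n \<noteq> 0" using assms by (auto simp: vec_eq_iff forall_2)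
  moreover have "{x. cross w (x - P) = 0} = {x. ?n \<bullet> x = cross w P}"
    by (auto simp: cross_eq_inner[symmetric])
  ultimately show ?thesis by (simp add: negligible_hyperplane)
qed

lemma open_imp_sets_lebesgue: "open (S :: (real^2) set) \<Longrightarrow> S \<in> sets lebesgue"
  by (metis borel_open sets_completionI_sets sets_lborel)

lemma compact_imp_sets_lebesgue: "compact (S :: (real^2) set) \<Longrightarrow> S \<in> sets lebesgue"
  using lmeasurable_compact fmeasurableD by blast

subsection \<open>Triangles\<close>

lemma mem_triangle_if_cross:
  assumes "cross (a - P) (x - P) \<ge> 0" "cross (b - a) (x - a) \<ge> 0" "cross (b - P) (x - P) < 0"
  shows "x \<in> convex hull {P, a, b}"
proof -
  define D where "D = cross (a - P) (b - P)"
  have D_eq: "D = cross (a - P) (x - P) + cross (b - a) (x - a) - cross (b - P) (x - P)"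
    unfolding D_def by (simp add: cross_def algebra_simps)
  have D_pos: "D > 0" using assms D_eq by linarith
  define p1 where "p1 = cross (b - a) (x - a) / D"
  define p2 where "p2 = - cross (b - P) (x - P) / D"
  define p3 where "p3 = cross (a - P) (x - P) / D"
  \<comment> \<open>Cramer's rule: the three signed areas are the barycentric coordinates of x, scaled by D.\<close>
  have barycentric: "D *\<^sub>R x = cross (b - a) (x - a) *\<^sub>R P + (- cross (b - P) (x - P)) *\<^sub>R a
      + cross (a - P) (x - P) *\<^sub>R b"
    unfolding D_def by (simp add: vec_eq_iff forall_2 cross_def) (simp add: algebra_simps)
  have "x = p1 *\<^sub>R P + p2 *\<^sub>R a + p3 *\<^sub>R b"
  proof -
    have "x = (1 / D) *\<^sub>R (D *\<^sub>R x)" using D_pos by simp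
    also have "\<dots> = p1 *\<^sub>R P + p2 *\<^sub>R a + p3 *\<^sub>R b"
      unfolding barycentric p1_def p2_def p3_def
      by (simp add: scaleR_add_right divide_inverse mult.commute)
    finally show ?thesis .
  qed
  moreover have "p1 \<ge> 0" "p2 \<ge> 0" "p3 \<ge> 0"
    using D_pos assms unfolding p1_def p2_def p3_def by auto
  moreover have "p1 + p2 + p3 = 1"
  proof -
    have "p1 + p2 + p3 = (cross (b - a) (x - a) - cross (b - P) (x - P) + cross (a - P) (x - P)) / D"
      unfolding p1_def p2_def p3_def by (simp add: add_divide_distrib diff_divide_distrib)
    also have "\<dots> = 1" using D_eq D_pos by simp
    finally show ?thesis .
  qed
  ultimately show ?thesis unfolding convex_hull_3 by blast
qed

lemma triangle_between_sides:
  assumes "cross (a - P) (b - P) \<ge> 0" and "y \<in> convex hull {P, a, b}"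
  shows "cross (a - P) (y - P) \<ge> 0 \<and> cross (b - P) (y - P) \<le> 0"
proof -
  obtain u v w where y: "y = u *\<^sub>R P + v *\<^sub>R a + w *\<^sub>R b"
    and uvw: "0 \<le> u" "0 \<le> v" "0 \<le> w" "u + v + w = 1"
    using assms(2) unfolding convex_hull_3 by blast
  have u: "u = 1 - v - w" using uvw by simp
  have "cross (a - P) (y - P) = w * cross (a - P) (b - P)"
    and "cross (b - P) (y - P) = - v * cross (a - P) (b - P)"
    unfolding y u by (simp_all add: cross_def algebra_simps)
  then show ?thesis using uvw assms(1) by simp
qed

lemma measure_triangle:
  "measure lebesgue (convex hull {P, a, b :: real^2}) = \<bar>cross (a - P) (b - P)\<bar> / 2"
proof -
  have "convex hull {P, a, b} \<in> sets lborel"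
    by (simp add: borel_compact finite_imp_compact_convex_hull)
  then have "measure lebesgue (convex hull {P, a, b}) = measure lborel (convex hull {P, a, b})"
    by simp
  also have "\<dots> = \<bar>cross (a - P) (b - P)\<bar> / 2"
    by (subst content_triangle) (simp add: cross_def abs_minus_commute algebra_simps)
  finally show ?thesis .
qed

subsection \<open>Convex polygons\<close>

lemma convex_polygon_length: "convex_polygon_vertices vs \<Longrightarrow> length vs \<ge> 3"
  by (simp add: convex_polygon_vertices_def)

lemma vtx_mod_length: "vtx vs (i mod length vs) = vtx vs i"
  by (simp add: vtx_def)

lemma vtx_add_length [simp]: "vtx vs (i + length vs) = vtx vs i"
  by (simp add: vtx_def)

lemma vtx_Suc_mod_length: "vtx vs (Suc (i mod length vs)) = vtx vs (Suc i)"
  by (simp add: vtx_def mod_Suc_eq)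

lemma vtx_in_set: "vs \<noteq> [] \<Longrightarrow> vtx vs i \<in> set vs"
  by (simp add: vtx_def)

lemma set_eq_vtx: "x \<in> set vs \<Longrightarrow> \<exists>j < length vs. x = vtx vs j"
  by (metis in_set_conv_nth mod_less vtx_def)

lemma add_mod_neq:
  fixes n :: nat assumes "0 < a" "a < n" shows "(c + a) mod n \<noteq> c mod n"
proof
  assume "(c + a) mod n = c mod n"
  then have "n dvd a" using mod_eq_dvd_iff_nat[of c "c + a" n] by simp
  then show False using assms by (simp add: nat_dvd_not_less)
qed

lemma vtx_left_of_edge:
  assumes convex: "convex_polygon_vertices vs"
    and "j mod length vs \<noteq> i mod length vs" "j mod length vs \<noteq> Suc i mod length vs"
  shows "cross (vtx vs (Suc i) - vtx vs i) (vtx vs j - vtx vs i) > 0"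
proof -
  let ?n = "length vs"
  have "?n > 0" using convex_polygon_length[OF convex] by linarith
  moreover have "j mod ?n \<noteq> Suc (i mod ?n) mod ?n" using assms(3) by (simp add: mod_Suc_eq)
  ultimately have "cross (vtx vs (Suc (i mod ?n)) - vtx vs (i mod ?n))
      (vtx vs (j mod ?n) - vtx vs (i mod ?n)) > 0"
    using convex assms(2) unfolding convex_polygon_vertices_def by simp
  then show ?thesis by (simp only: vtx_Suc_mod_length vtx_mod_length)
qed

lemma vtx_add_left_of_edge:
  assumes convex: "convex_polygon_vertices vs" and "1 < a" "a < length vs"
  shows "cross (vtx vs (Suc c) - vtx vs c) (vtx vs (c + a) - vtx vs c) > 0"
proof (rule vtx_left_of_edge[OF convex])
  show "(c + a) mod length vs \<noteq> c mod length vs"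
    using add_mod_neq[of a "length vs" c] assms by simp
  show "(c + a) mod length vs \<noteq> Suc c mod length vs"
    using add_mod_neq[of "a - 1" "length vs" "Suc c"] assms by simp
qed

lemma consecutive_chords_cross_pos:
  assumes convex: "convex_polygon_vertices vs" and "1 \<le> a" "a + 2 \<le> length vs"
  shows "cross (vtx vs (c + a) - vtx vs c) (vtx vs (c + Suc a) - vtx vs c) > 0"
proof -
  let ?n = "length vs"
  have "cross (vtx vs (Suc (c + a)) - vtx vs (c + a)) (vtx vs ((c + a) + (?n - a)) - vtx vs (c + a)) > 0"
    using vtx_add_left_of_edge[OF convex, of "?n - a" "c + a"] assms by simp
  moreover have "(c + a) + (?n - a) = c + ?n" using assms by simp
  ultimately have "cross (vtx vs (Suc (c + a)) - vtx vs (c + a)) (vtx vs c - vtx vs (c + a)) > 0"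
    by simp
  then show ?thesis by (simp add: cross_def algebra_simps)
qed

lemma chord_cross_pos:
  assumes convex: "convex_polygon_vertices vs" and "1 \<le> a" "a < b" "b < length vs"
  shows "cross (vtx vs (c + a) - vtx vs c) (vtx vs (c + b) - vtx vs c) > 0"
  using assms(3,4)
proof (induction b rule: less_induct)
  case (less b)
  let ?x = "\<lambda>k. vtx vs (c + k) - vtx vs c"
  show ?case
  proof (cases "a = 1 \<or> b = Suc a")
    case True
    then show ?thesis
      using vtx_add_left_of_edge[OF convex, of b c] consecutive_chords_cross_pos[OF convex, of a c]
        less assms by auto
  next
    case False
    then obtain b' where b': "b = Suc b'" "a < b'" "2 \<le> a" using less assms by (cases b) auto
    have "cross (?x a) (?x b') > 0" using less.IH[of b'] b' less by simp
    moreover have "cross (?x b') (?x b) > 0"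
      using consecutive_chords_cross_pos[OF convex, of b' c] b' less by simp
    moreover have ray1: "cross (?x 1) (?x k) > 0" if "k \<in> {a, b', b}" for k
      using vtx_add_left_of_edge[OF convex, of k c] that b' less by auto
    \<comment> \<open>The Pluecker relation propagates positivity from the pairs (a, b') and (b', b) to (a, b).\<close>
    ultimately have "cross (?x 1) (?x b') * cross (?x a) (?x b) > 0"
      unfolding cross_plucker[of "?x 1" "?x b'" "?x a" "?x b"] by (simp add: add_pos_pos)
    then show ?thesis using ray1[of b'] by (simp add: zero_less_mult_iff)
  qed
qed

lemma chord_cross_nonneg:
  assumes convex: "convex_polygon_vertices vs" and "a \<le> b" "b \<le> length vs \<or> a = length vs"
  shows "cross (vtx vs (c + a) - vtx vs c) (vtx vs (c + b) - vtx vs c) \<ge> 0"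
proof -
  let ?n = "length vs"
  consider "a = 0" | "a = ?n" | "a = b" | "b = ?n" | "1 \<le> a \<and> a < b \<and> b < ?n"
    using assms by linarith
  then show ?thesis
  proof cases
    case 5
    then show ?thesis using chord_cross_pos[OF convex, of a b c] by simp
  qed simp_all
qed

lemma vtx_add_neq:
  assumes convex: "convex_polygon_vertices vs" and "1 \<le> k" "k < length vs"
  shows "vtx vs (c + k) \<noteq> vtx vs c"
proof (cases "k < length vs - 1")
  case True
  then have "cross (vtx vs (c + k) - vtx vs c) (vtx vs (c + (length vs - 1)) - vtx vs c) > 0"
    using chord_cross_pos[OF convex, of k "length vs - 1" c] assms by simp
  then show ?thesis by auto
next
  case False
  then have "cross (vtx vs (c + 1) - vtx vs c) (vtx vs (c + k) - vtx vs c) > 0"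
    using chord_cross_pos[OF convex, of 1 k c] assms convex_polygon_length[OF convex] by simp
  then show ?thesis by auto
qed

lemma polygon_left_of_edge:
  assumes convex: "convex_polygon_vertices vs" and x: "x \<in> polygon vs"
  shows "cross (vtx vs (Suc k) - vtx vs k) (x - vtx vs k) \<ge> 0"
proof -
  let ?H = "{x. 0 \<le> cross (vtx vs (Suc k) - vtx vs k) (x - vtx vs k)}"
  have "set vs \<subseteq> ?H"
  proof
    fix y assume "y \<in> set vs"
    then obtain j where j: "j < length vs" "y = vtx vs j" using set_eq_vtx by blast
    show "y \<in> ?H"
    proof (cases "j mod length vs = k mod length vs \<or> j mod length vs = Suc k mod length vs")
      case True
      then have "y = vtx vs k \<or> y = vtx vs (Suc k)" using j by (metis vtx_def)
      then show ?thesis by (auto simp del: cross_diff_left cross_diff_right)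
    next
      case False
      then show ?thesis using vtx_left_of_edge[OF convex, of j k] j by auto
    qed
  qed
  then have "polygon vs \<subseteq> ?H"
    unfolding polygon_def by (intro hull_minimal convex_cross_halfplane)
  then show ?thesis using x by auto
qed

lemma compact_polygon: "compact (polygon vs)"
  unfolding polygon_def by (simp add: finite_imp_compact_convex_hull)

subsection \<open>Shoelace sums and triangle fans\<close>

definition shoelace :: "(real^2) list \<Rightarrow> real" where
  "shoelace vs = (\<Sum>t<length vs. cross (vtx vs t) (vtx vs (Suc t)))"

text \<open>
  Twice the signed area of the polygon P, v(I+1), ..., v(I+d), P'. The first edge from P
  to v(I+1) is accounted for as the edge v(I) v(I+1) corrected by cross (vtx vs I) P,
  which agrees with it as long as P lies on the line v(I) v(I+1) and makes the
  expression a polynomial of degree two in (P, P').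
\<close>
definition arc_shoelace :: "(real^2) list \<Rightarrow> nat \<Rightarrow> nat \<Rightarrow> real^2 \<Rightarrow> real^2 \<Rightarrow> real" where
  "arc_shoelace vs I d P P' =
     (\<Sum>t<d. cross (vtx vs (I + t)) (vtx vs (Suc (I + t))))
       - cross (vtx vs I) P + cross (vtx vs (I + d)) P' + cross P' P"

definition fan_vertex :: "(real^2) list \<Rightarrow> nat \<Rightarrow> nat \<Rightarrow> real^2 \<Rightarrow> real^2 \<Rightarrow> nat \<Rightarrow> real^2" where
  "fan_vertex vs I d P P' t = (if t = 0 then P else if t \<le> d then vtx vs (I + t) else P')"

lemma exists_last_before_failure:
  assumes "Q 0" "\<not> Q (Suc d)" shows "\<exists>t\<le>d. Q t \<and> \<not> Q (Suc t)"
  using assms by (induction d) (auto intro: le_SucI)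

text \<open>
  P lies on edge I at fraction l and P' on edge I + d at fraction m, with P' not behind P
  when both are on the same edge; the boundary arc from P counterclockwise to P' passes
  the vertices v(I+1), ..., v(I+d).
\<close>
locale polygon_chord =
  fixes vs :: "(real^2) list" and I d :: nat and l m :: real and P P' :: "real^2"
  assumes convex: "convex_polygon_vertices vs"
    and l: "0 \<le> l" "l \<le> 1" and m: "0 \<le> m" "m \<le> 1"
    and d: "d \<le> length vs" and same_edge: "d = 0 \<Longrightarrow> l \<le> m"
    and P: "P = vtx vs I + l *\<^sub>R (vtx vs (Suc I) - vtx vs I)"
    and P': "P' = vtx vs (I + d) + m *\<^sub>R (vtx vs (Suc (I + d)) - vtx vs (I + d))"
begin

abbreviation "p \<equiv> fan_vertex vs I d P P'"

lemma polygon_left_of_fan_edge: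
  assumes x: "x \<in> polygon vs" and t: "t \<le> d"
  shows "cross (p (Suc t) - p t) (x - p t) \<ge> 0"
proof -
  have edge: "\<And>k. cross (vtx vs (Suc k) - vtx vs k) (x - vtx vs k) \<ge> 0"
    using polygon_left_of_edge[OF convex x] by blast
  consider "t = 0" "d = 0" | "t = 0" "d \<noteq> 0" | "t \<noteq> 0" "t < d" | "t \<noteq> 0" "t = d"
    using t by linarith
  then show ?thesis
  proof cases
    case 1
    have "cross (P' - P) (x - P) = (m - l) * cross (vtx vs (Suc I) - vtx vs I) (x - vtx vs I)"
      unfolding P P' using 1 by (simp add: cross_def algebra_simps)
    then show ?thesis using 1 same_edge edge[of I] by (simp add: fan_vertex_def)
  next
    case 2
    have "cross (vtx vs (Suc I) - P) (x - P) = (1 - l) * cross (vtx vs (Suc I) - vtx vs I) (x - vtx vs I)"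
      unfolding P by (simp add: cross_def algebra_simps)
    then show ?thesis using 2 edge[of I] l by (simp add: fan_vertex_def)
  next
    case 3
    then show ?thesis using edge[of "I + t"] by (simp add: fan_vertex_def)
  next
    case 4
    have "cross (P' - vtx vs (I + d)) (x - vtx vs (I + d))
        = m * cross (vtx vs (Suc (I + d)) - vtx vs (I + d)) (x - vtx vs (I + d))"
      unfolding P' by (simp add: cross_def algebra_simps)
    then show ?thesis using 4 edge[of "I + d"] m by (simp add: fan_vertex_def)
  qed
qed

lemma right_part_subset_fan:
  assumes x: "x \<in> polygon vs" and right: "cross (P' - P) (x - P) < 0"
  shows "\<exists>t\<le>d. x \<in> convex hull {P, p t, p (Suc t)}"
proof -
  let ?left = "\<lambda>t. cross (p t - P) (x - P) \<ge> 0"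
  have "?left 0" "\<not> ?left (Suc d)" using right by (simp_all add: fan_vertex_def)
  then obtain t where "t \<le> d" "?left t" "\<not> ?left (Suc t)"
    using exists_last_before_failure[of ?left d] by blast
  then show ?thesis
    using polygon_left_of_fan_edge[OF x] by (intro exI[of _ t] conjI mem_triangle_if_cross) auto
qed

lemma fan_triangle_cross_nonneg:
  assumes t: "t \<le> d" shows "cross (p t - P) (p (Suc t) - P) \<ge> 0"
proof -
  have vertex_step: "cross (vtx vs (I + k) - P) (vtx vs (Suc (I + k)) - P) \<ge> 0"
    if k: "1 \<le> k" "k \<le> d" for k
  proof -
    \<comment> \<open>P is a convex combination of v(I) and v(I+1); use the claim from both endpoints.\<close>
    have "cross (vtx vs (I + k) - P) (vtx vs (Suc (I + k)) - P) =
        (1 - l) * cross (vtx vs (I + k) - vtx vs I) (vtx vs (I + Suc k) - vtx vs I)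
        + l * cross (vtx vs (Suc I + (k - 1)) - vtx vs (Suc I)) (vtx vs (Suc I + k) - vtx vs (Suc I))"
      unfolding P using k by (simp add: cross_def algebra_simps)
    moreover have "cross (vtx vs (I + k) - vtx vs I) (vtx vs (I + Suc k) - vtx vs I) \<ge> 0"
      using chord_cross_nonneg[OF convex, of k "Suc k" I] k d by linarith
    moreover have
      "cross (vtx vs (Suc I + (k - 1)) - vtx vs (Suc I)) (vtx vs (Suc I + k) - vtx vs (Suc I)) \<ge> 0"
      using chord_cross_nonneg[OF convex, of "k - 1" k "Suc I"] k d by linarith
    ultimately show ?thesis using l by simp
  qed
  consider "t = 0" | "t \<noteq> 0" "t < d" | "t \<noteq> 0" "t = d" using t by linarith
  then show ?thesis
  proof cases
    case 3
    have "cross (vtx vs (I + d) - P) (P' - P) = m * cross (vtx vs (I + d) - P) (vtx vs (Suc (I + d)) - P)"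
      unfolding P' by (simp add: cross_def algebra_simps)
    then show ?thesis using 3 vertex_step[of d] m by (simp add: fan_vertex_def)
  qed (use vertex_step[of t] in \<open>simp_all add: fan_vertex_def\<close>)
qed

lemma sum_fan_cross: "(\<Sum>t\<le>d. cross (p t - P) (p (Suc t) - P)) = arc_shoelace vs I d P P'"
proof -
  have "(\<Sum>t\<le>d. cross (p t) (p (Suc t)))
      = (\<Sum>t<d. cross (vtx vs (I + t)) (vtx vs (Suc (I + t))))
          - cross (vtx vs I) P + cross (vtx vs (I + d)) P'"
  proof (cases d)
    case 0
    then show ?thesis unfolding P P' by (simp add: fan_vertex_def cross_def algebra_simps)
  next
    case (Suc e)
    have "(\<Sum>t\<le>e. cross (p t) (p (Suc t))) = (\<Sum>t\<le>e. cross (vtx vs (I + t)) (vtx vs (Suc (I + t)))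
        + (if t = 0 then - cross (vtx vs I) P else 0))"
      using Suc by (intro sum.cong) (auto simp: fan_vertex_def P cross_def algebra_simps)
    then show ?thesis
      using Suc by (simp add: sum.distrib fan_vertex_def lessThan_Suc_atMost[symmetric])
  qed
  then show ?thesis
    unfolding sum_cross_translate arc_shoelace_def by (simp add: fan_vertex_def)
qed

lemma measure_right_part_le:
  "measure lebesgue (polygon vs \<inter> {x. cross (P' - P) (x - P) < 0}) \<le> arc_shoelace vs I d P P' / 2"
proof -
  let ?T = "\<lambda>t. convex hull {P, p t, p (Suc t)}"
  have compact_T: "\<And>t. compact (?T t)" by (simp add: finite_imp_compact_convex_hull)
  have "measure lebesgue (polygon vs \<inter> {x. cross (P' - P) (x - P) < 0}) \<le> measure lebesgue (\<Union>t\<le>d. ?T t)"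
    using right_part_subset_fan
    by (intro measure_mono_fmeasurable sets.Int compact_imp_sets_lebesgue compact_polygon
        open_imp_sets_lebesgue open_cross_less lmeasurable_compact compact_UN compact_T) auto
  also have "\<dots> \<le> (\<Sum>t\<le>d. measure lebesgue (?T t))"
    by (rule measure_UNION_le) (auto intro: compact_imp_sets_lebesgue compact_T)
  also have "\<dots> = (\<Sum>t\<le>d. cross (p t - P) (p (Suc t) - P) / 2)"
    using fan_triangle_cross_nonneg by (intro sum.cong) (simp_all add: measure_triangle)
  also have "\<dots> = arc_shoelace vs I d P P' / 2"
    by (simp only: sum_divide_distrib[symmetric] sum_fan_cross)
  finally show ?thesis .
qed

end

subsection \<open>The areas on the two sides of a chord\<close>

lemma shoelace_eq_sum_vertex_fan:
  assumes convex: "convex_polygon_vertices vs"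
  shows "(\<Sum>t\<le>length vs - 1. cross (vtx vs t - vtx vs 0) (vtx vs (Suc t) - vtx vs 0)) = shoelace vs"
proof -
  have n: "Suc (length vs - 1) = length vs" using convex_polygon_length[OF convex] by simp
  then have "vtx vs (Suc (length vs - 1)) = vtx vs 0" using vtx_add_length[of vs 0] by simp
  moreover have "{..length vs - 1} = {..<length vs}" using n lessThan_Suc_atMost by metis
  ultimately show ?thesis unfolding sum_cross_translate shoelace_def by simp
qed

lemma vertex_fan_pairwise_negligible:
  assumes convex: "convex_polygon_vertices vs" and "t < t'" "t' \<le> length vs - 1"
  shows "negligible (convex hull {vtx vs 0, vtx vs t, vtx vs (Suc t)}
                      \<inter> convex hull {vtx vs 0, vtx vs t', vtx vs (Suc t')})"
proof -
  let ?w = "vtx vs (Suc t) - vtx vs 0"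
  have n: "length vs \<ge> 3" using convex_polygon_length[OF convex] .
  have t: "Suc t \<le> length vs" "Suc t \<le> t'" "Suc t' \<le> length vs" using assms n by linarith+
  have "?w \<noteq> 0" using vtx_add_neq[OF convex, of "Suc t" 0] t by simp
  \<comment> \<open>The two triangles lie on opposite sides of the diagonal from v(0) to v(t+1).\<close>
  have "0 \<le> cross (vtx vs t - vtx vs 0) (vtx vs (Suc t) - vtx vs 0)"
    using chord_cross_nonneg[OF convex, of t "Suc t" 0] t by (simp del: cross_diff_left cross_diff_right)
  then have "convex hull {vtx vs 0, vtx vs t, vtx vs (Suc t)} \<subseteq> {x. cross ?w (x - vtx vs 0) \<le> 0}"
    using triangle_between_sides by blast
  moreover have "convex hull {vtx vs 0, vtx vs t', vtx vs (Suc t')} \<subseteq> {x. 0 \<le> cross ?w (x - vtx vs 0)}"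
    using chord_cross_nonneg[OF convex, of "Suc t" t' 0]
      chord_cross_nonneg[OF convex, of "Suc t" "Suc t'" 0] t
    by (intro hull_minimal convex_cross_halfplane) (auto simp del: cross_diff_left cross_diff_right)
  ultimately have "convex hull {vtx vs 0, vtx vs t, vtx vs (Suc t)}
      \<inter> convex hull {vtx vs 0, vtx vs t', vtx vs (Suc t')} \<subseteq> {x. cross ?w (x - vtx vs 0) = 0}"
    by (blast intro: order.antisym)
  then show ?thesis using negligible_cross_line[OF \<open>?w \<noteq> 0\<close>] negligible_subset by blast
qed

lemma shoelace_le_measure_polygon:
  assumes convex: "convex_polygon_vertices vs"
  shows "shoelace vs / 2 \<le> measure lebesgue (polygon vs)"
proof -
  let ?d = "length vs - 1"
  let ?T = "\<lambda>t. convex hull {vtx vs 0, vtx vs t, vtx vs (Suc t)}"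
  have n: "length vs \<ge> 3" using convex_polygon_length[OF convex] .
  have compact_T: "\<And>t. compact (?T t)" by (simp add: finite_imp_compact_convex_hull)
  have orientation: "cross (vtx vs t - vtx vs 0) (vtx vs (Suc t) - vtx vs 0) \<ge> 0" if "t \<le> ?d" for t
  proof -
    have "Suc t \<le> length vs" using that n by linarith
    then show ?thesis
      using chord_cross_nonneg[OF convex, of t "Suc t" 0] by (simp del: cross_diff_left cross_diff_right)
  qed
  have "measure lebesgue (\<Union>t\<le>?d. ?T t) = (\<Sum>t\<le>?d. measure lebesgue (?T t))"
  proof (rule measure_negligible_finite_Union_image)
    show "pairwise (\<lambda>x y. negligible (?T x \<inter> ?T y)) {..?d}"
      unfolding pairwise_def
      using vertex_fan_pairwise_negligible[OF convex] by (metis Int_commute atMost_iff linorder_neqE_nat)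
  qed (auto intro: lmeasurable_compact compact_T)
  also have "\<dots> = (\<Sum>t\<le>?d. cross (vtx vs t - vtx vs 0) (vtx vs (Suc t) - vtx vs 0) / 2)"
    using orientation by (intro sum.cong) (simp_all add: measure_triangle)
  also have "\<dots> = shoelace vs / 2"
    by (simp only: sum_divide_distrib[symmetric] shoelace_eq_sum_vertex_fan[OF convex])
  finally have "measure lebesgue (\<Union>t\<le>?d. ?T t) = shoelace vs / 2" .
  moreover have "(\<Union>t\<le>?d. ?T t) \<subseteq> polygon vs"
    unfolding polygon_def using n by (intro UN_least hull_mono) (auto intro!: vtx_in_set)
  then have "measure lebesgue (\<Union>t\<le>?d. ?T t) \<le> measure lebesgue (polygon vs)"
    by (rule measure_mono_fmeasurable)
      (auto intro: compact_imp_sets_lebesgue lmeasurable_compact compact_polygon compact_UN compact_T)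
  ultimately show ?thesis by simp
qed

lemma sum_lessThan_add: "(\<Sum>t<a + b :: nat. g t) = (\<Sum>t<a. g t) + (\<Sum>t<b. g (a + t))"
  by (induction b) (simp_all add: add.assoc)

lemma sum_shift_periodic:
  fixes f :: "nat \<Rightarrow> real"
  assumes "\<And>k. f (k + n) = f k"
  shows "(\<Sum>t<n. f (I + t)) = (\<Sum>t<n. f t)"
proof (induction I)
  case (Suc I)
  have "(\<Sum>t<n. f (Suc I + t)) = (\<Sum>t<Suc n. f (I + t)) - f I"
    by (simp only: sum.lessThan_Suc_shift) simp
  also have "\<dots> = (\<Sum>t<n. f (I + t))" using assms[of I] by (simp add: add.commute)
  finally show ?case using Suc by simp
qed simp

lemma arc_shoelace_complement:
  assumes "d \<le> length vs"
  shows "arc_shoelace vs I d P P' + arc_shoelace vs (I + d) (length vs - d) P' P = shoelace vs"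
proof -
  let ?n = "length vs"
  let ?f = "\<lambda>k. cross (vtx vs k) (vtx vs (Suc k))"
  have "(\<Sum>t<d. ?f (I + t)) + (\<Sum>t<?n - d. ?f (I + d + t)) = (\<Sum>t<?n. ?f (I + t))"
    using assms sum_lessThan_add[of "\<lambda>t. ?f (I + t)" d "?n - d"] by (simp add: add.assoc)
  also have "\<dots> = shoelace vs"
    unfolding shoelace_def by (rule sum_shift_periodic) (metis add_Suc vtx_add_length)
  finally show ?thesis
    using assms cross_antisym[of P' P] by (simp add: arc_shoelace_def)
qed

lemma measure_polygon_le_sides:
  assumes "P' \<noteq> P"
  shows "measure lebesgue (polygon vs) \<le> measure lebesgue (polygon vs \<inter> {x. cross (P' - P) (x - P) > 0})
                                       + measure lebesgue (polygon vs \<inter> {x. cross (P' - P) (x - P) < 0})"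
proof -
  let ?Q = "polygon vs" and ?g = "\<lambda>x. cross (P' - P) (x - P)"
  have "P' - P \<noteq> 0" using assms by simp
  then have "negligible (?Q \<inter> {x. ?g x = 0})"
    by (rule negligible_subset[OF negligible_cross_line]) blast
  then have line: "?Q \<inter> {x. ?g x = 0} \<in> sets lebesgue" "measure lebesgue (?Q \<inter> {x. ?g x = 0}) = 0"
    using negligible_iff_measure fmeasurableD by blast+
  have sides: "?Q \<inter> {x. ?g x > 0} \<in> sets lebesgue" "?Q \<inter> {x. ?g x < 0} \<in> sets lebesgue"
    by (intro sets.Int compact_imp_sets_lebesgue compact_polygon open_imp_sets_lebesgue
        open_cross_greater open_cross_less)+
  have "measure lebesgue ?Q
      = measure lebesgue (?Q \<inter> {x. ?g x > 0} \<union> ?Q \<inter> {x. ?g x < 0} \<union> ?Q \<inter> {x. ?g x = 0})"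
    by (rule arg_cong) (auto simp del: cross_diff_left cross_diff_right)
  also have "\<dots> \<le> measure lebesgue (?Q \<inter> {x. ?g x > 0} \<union> ?Q \<inter> {x. ?g x < 0})
      + measure lebesgue (?Q \<inter> {x. ?g x = 0})"
    by (rule measure_Un_le) (use sides line in auto)
  also have "\<dots> \<le> measure lebesgue (?Q \<inter> {x. ?g x > 0}) + measure lebesgue (?Q \<inter> {x. ?g x < 0})"
    using measure_Un_le[OF sides] line(2) by simp
  finally show ?thesis .
qed

lemma area_split_by_chord:
  assumes chord: "polygon_chord vs I d l m P P'"
    and full_turn: "d = length vs \<Longrightarrow> m \<le> l" and "P \<noteq> P'"
  shows "measure lebesgue (polygon vs \<inter> {x. cross (P' - P) (x - P) > 0})
       - measure lebesgue (polygon vs \<inter> {x. cross (P' - P) (x - P) < 0})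
       = shoelace vs / 2 - arc_shoelace vs I d P P'"
proof -
  interpret right: polygon_chord vs I d l m P P' by (rule chord)
  let ?n = "length vs"
  have I_around: "I + d + (?n - d) = I + ?n" using right.d by simp
  interpret left: polygon_chord vs "I + d" "?n - d" m l P' P
  proof
    show "P = vtx vs (I + d + (?n - d))
        + l *\<^sub>R (vtx vs (Suc (I + d + (?n - d))) - vtx vs (I + d + (?n - d)))"
      unfolding I_around using right.P by (metis add_Suc vtx_add_length)
  qed (use right.convex right.l right.m right.P' full_turn right.d in auto)
  have "{x. cross (P - P') (x - P') < 0} = {x. cross (P' - P) (x - P) > 0}"
    by (auto simp: cross_def algebra_simps)
  then have "measure lebesgue (polygon vs \<inter> {x. cross (P' - P) (x - P) > 0})
      \<le> arc_shoelace vs (I + d) (?n - d) P' P / 2"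
    using left.measure_right_part_le by simp
  moreover have "measure lebesgue (polygon vs \<inter> {x. cross (P' - P) (x - P) < 0})
      \<le> arc_shoelace vs I d P P' / 2"
    by (rule right.measure_right_part_le)
  moreover have "arc_shoelace vs I d P P' + arc_shoelace vs (I + d) (?n - d) P' P = shoelace vs"
    by (rule arc_shoelace_complement[OF right.d])
  moreover have "shoelace vs / 2 \<le> measure lebesgue (polygon vs)"
    by (rule shoelace_le_measure_polygon[OF right.convex])
  moreover have "measure lebesgue (polygon vs)
      \<le> measure lebesgue (polygon vs \<inter> {x. cross (P' - P) (x - P) > 0})
      + measure lebesgue (polygon vs \<inter> {x. cross (P' - P) (x - P) < 0})"
    by (rule measure_polygon_le_sides) (use \<open>P \<noteq> P'\<close> in simp)
  ultimately show ?thesis by linarith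
qed

subsection \<open>The arc-length parametrization\<close>

lemma edge_len_pos: "convex_polygon_vertices vs \<Longrightarrow> edge_len vs k > 0"
  using vtx_add_neq[of vs 1 k] convex_polygon_length[of vs] by (simp add: edge_len_def)

lemma edge_len_mod_length: "edge_len vs (k mod length vs) = edge_len vs k"
  unfolding edge_len_def by (simp add: vtx_mod_length vtx_Suc_mod_length)

lemma cum_len_0 [simp]: "cum_len vs 0 = 0"
  by (simp add: cum_len_def)

lemma cum_len_Suc: "cum_len vs (Suc K) = cum_len vs K + edge_len vs K"
  by (simp add: cum_len_def)

lemma cum_len_add_length: "cum_len vs (K + length vs) = cum_len vs K + perimeter vs"
proof -
  have "edge_len vs (k + length vs) = edge_len vs k" for k
    using edge_len_mod_length[of vs "k + length vs"] edge_len_mod_length[of vs k] by simp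
  then show ?thesis
    unfolding cum_len_def perimeter_def
    using sum.atLeastLessThan_concat[of 0 "length vs" "K + length vs" "edge_len vs"]
      sum.shift_bounds_nat_ivl[of "edge_len vs" 0 "length vs" K]
    by (simp add: atLeast0LessThan add.commute)
qed

lemma cum_len_add_mult_length: "cum_len vs (K + q * length vs) = cum_len vs K + real q * perimeter vs"
proof (induction q)
  case (Suc q)
  have "K + Suc q * length vs = (K + q * length vs) + length vs" by simp
  then show ?case using Suc cum_len_add_length[of vs "K + q * length vs"] by (simp add: algebra_simps)
qed simp

lemma cum_len_strict_mono:
  assumes "convex_polygon_vertices vs" shows "strict_mono (cum_len vs)"
  by (rule strict_monoI_Suc) (simp add: cum_len_Suc edge_len_pos[OF assms])

lemma perimeter_pos: "convex_polygon_vertices vs \<Longrightarrow> perimeter vs > 0"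
  using cum_len_strict_mono[of vs] convex_polygon_length[of vs]
  unfolding perimeter_def by (metis cum_len_0 not_numeral_le_zero strict_monoD zero_less_iff_neq_zero)

lemma cum_len_segment_exists:
  assumes "0 \<le> x" "x < cum_len vs N"
  shows "\<exists>K<N. cum_len vs K \<le> x \<and> x < cum_len vs (Suc K)"
  using assms(2)
proof (induction N)
  case (Suc N)
  then show ?case by (cases "x < cum_len vs N") (auto intro: less_SucI)
qed (use assms(1) in simp)

lemma interval_within_edge:
  assumes "0 \<le> a" "a < b" "b \<le> cum_len vs N"
    and no_vertex: "\<And>K. K \<le> N \<Longrightarrow> cum_len vs K \<notin> {a<..<b}"
  obtains K where "K < N" "cum_len vs K \<le> a" "b \<le> cum_len vs (Suc K)"
proof -
  obtain K where K: "K < N" "cum_len vs K \<le> (a + b) / 2" "(a + b) / 2 < cum_len vs (Suc K)"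
    using cum_len_segment_exists[of "(a + b) / 2" vs N] assms by auto
  have "cum_len vs K \<le> a" using no_vertex[of K] K by fastforce
  moreover have "b \<le> cum_len vs (Suc K)" using no_vertex[of "Suc K"] K by fastforce
  ultimately show thesis using K that by blast
qed

lemma bdry_point_periodic:
  assumes "convex_polygon_vertices vs"
  shows "bdry_point vs (u + of_int j * perimeter vs) = bdry_point vs u"
proof -
  let ?L = "perimeter vs"
  have "(u + of_int j * ?L) / ?L = u / ?L + of_int j"
    using perimeter_pos[OF assms] by (simp add: field_simps)
  then have "u + of_int j * ?L - ?L * of_int \<lfloor>(u + of_int j * ?L) / ?L\<rfloor> = u - ?L * of_int \<lfloor>u / ?L\<rfloor>"
    by (simp add: algebra_simps)
  then show ?thesis unfolding bdry_point_def Let_def by (simp only:)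
qed

lemma bdry_point_first_lap:
  assumes convex: "convex_polygon_vertices vs" and k: "k < length vs"
    and t: "cum_len vs k \<le> t" "t < cum_len vs (Suc k)"
  shows "bdry_point vs t
    = vtx vs k + ((t - cum_len vs k) / edge_len vs k) *\<^sub>R (vtx vs (Suc k) - vtx vs k)"
proof -
  have mono: "strict_mono (cum_len vs)" by (rule cum_len_strict_mono[OF convex])
  have "0 \<le> t" using t mono strict_mono_less_eq[OF mono, of 0 k] by simp
  moreover have "t < perimeter vs"
    using t k strict_mono_less_eq[OF mono, of "Suc k" "length vs"] unfolding perimeter_def by simp
  ultimately have "\<lfloor>t / perimeter vs\<rfloor> = 0" by (simp add: floor_eq_iff)
  moreover have "(GREATEST k'. k' < length vs \<and> cum_len vs k' \<le> t) = k"
  proof (rule Greatest_equality)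
    fix y assume "y < length vs \<and> cum_len vs y \<le> t"
    then show "y \<le> k" using t strict_mono_less_eq[OF mono, of "Suc k" y] by linarith
  qed (use k t in simp)
  ultimately show ?thesis unfolding bdry_point_def Let_def by simp
qed

lemma bdry_point_on_edge:
  assumes convex: "convex_polygon_vertices vs"
    and u: "cum_len vs K \<le> u" "u \<le> cum_len vs (Suc K)"
  shows "bdry_point vs u
    = vtx vs K + ((u - cum_len vs K) / edge_len vs K) *\<^sub>R (vtx vs (Suc K) - vtx vs K)"
proof -
  let ?n = "length vs"
  have n: "?n > 0" using convex_polygon_length[OF convex] by linarith
  have half_open: "bdry_point vs u
      = vtx vs K + ((u - cum_len vs K) / edge_len vs K) *\<^sub>R (vtx vs (Suc K) - vtx vs K)"
    if u: "cum_len vs K \<le> u" "u < cum_len vs (Suc K)" for K u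
  proof -
    define k where "k = K mod ?n"
    define q where "q = K div ?n"
    have K: "K = k + q * ?n" unfolding k_def q_def by simp
    have shift: "cum_len vs K = cum_len vs k + real q * perimeter vs"
      "cum_len vs (Suc K) = cum_len vs (Suc k) + real q * perimeter vs"
      using cum_len_add_mult_length[of vs k q] cum_len_add_mult_length[of vs "Suc k" q]
      unfolding K by simp_all
    have "bdry_point vs u = bdry_point vs (u - real q * perimeter vs)"
      using bdry_point_periodic[OF convex, of "u - real q * perimeter vs" "int q"] by simp
    also have "\<dots> = vtx vs k + ((u - cum_len vs K) / edge_len vs k) *\<^sub>R (vtx vs (Suc k) - vtx vs k)"
      using bdry_point_first_lap[OF convex, of k "u - real q * perimeter vs"] u n shift
      unfolding k_def by (simp add: algebra_simps)
    finally show ?thesis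
      unfolding k_def by (simp only: vtx_mod_length vtx_Suc_mod_length edge_len_mod_length)
  qed
  show ?thesis
  proof (cases "u < cum_len vs (Suc K)")
    case True then show ?thesis using half_open u by simp
  next
    case False
    then have u_end: "u = cum_len vs (Suc K)" using u by simp
    have "cum_len vs (Suc K) < cum_len vs (Suc (Suc K))"
      using cum_len_strict_mono[OF convex] by (simp add: strict_mono_def)
    then have "bdry_point vs u = vtx vs (Suc K)" using half_open[of "Suc K" u] u_end by simp
    moreover have "(u - cum_len vs K) / edge_len vs K = 1"
      using u_end edge_len_pos[OF convex, of K] by (simp add: cum_len_Suc)
    ultimately show ?thesis by simp
  qed
qed

lemma bdry_point_affine_on_edge:
  assumes "convex_polygon_vertices vs"
  shows "\<exists>a b. \<forall>u\<in>{cum_len vs K..cum_len vs (Suc K)}. bdry_point vs u = a + u *\<^sub>R b"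
proof (intro exI ballI)
  let ?e = "edge_len vs K" and ?w = "vtx vs (Suc K) - vtx vs K"
  fix u assume "u \<in> {cum_len vs K..cum_len vs (Suc K)}"
  then have "bdry_point vs u = vtx vs K + ((u - cum_len vs K) / ?e) *\<^sub>R ?w"
    using bdry_point_on_edge[OF assms] by simp
  also have "\<dots> = (vtx vs K - (cum_len vs K / ?e) *\<^sub>R ?w) + u *\<^sub>R ((1 / ?e) *\<^sub>R ?w)"
    by (simp add: diff_divide_distrib scaleR_diff_left algebra_simps)
  finally show "bdry_point vs u = (vtx vs K - (cum_len vs K / ?e) *\<^sub>R ?w) + u *\<^sub>R ((1 / ?e) *\<^sub>R ?w)" .
qed

lemma area_diff_periodic:
  assumes "convex_polygon_vertices vs"
  shows "area_diff vs (s0 + of_int j * perimeter vs) s = area_diff vs s0 s"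
proof -
  have "bdry_point vs (s0 + of_int j * perimeter vs + s) = bdry_point vs (s0 + s)"
    "bdry_point vs (s0 + of_int j * perimeter vs + s + perimeter vs / 2)
      = bdry_point vs (s0 + s + perimeter vs / 2)"
    using bdry_point_periodic[OF assms, of "s0 + s" j]
      bdry_point_periodic[OF assms, of "s0 + s + perimeter vs / 2" j]
    by (simp_all add: algebra_simps)
  then show ?thesis unfolding area_diff_def Let_def by (simp only:)
qed

lemma area_diff_on_edges:
  assumes convex: "convex_polygon_vertices vs"
    and K: "cum_len vs K \<le> s0 + s" "s0 + s \<le> cum_len vs (Suc K)"
    and J: "cum_len vs J \<le> s0 + s + perimeter vs / 2" "s0 + s + perimeter vs / 2 \<le> cum_len vs (Suc J)"
    and "K \<le> J" "J \<le> K + length vs"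
  shows "area_diff vs s0 s =
    (let P = bdry_point vs (s0 + s); P' = bdry_point vs (s0 + s + perimeter vs / 2)
     in if P = P' then 0 else shoelace vs / 2 - arc_shoelace vs K (J - K) P P')"
proof -
  let ?L = "perimeter vs" and ?n = "length vs"
  let ?P = "bdry_point vs (s0 + s)" and ?P' = "bdry_point vs (s0 + s + ?L / 2)"
  define l where "l = (s0 + s - cum_len vs K) / edge_len vs K"
  define m where "m = (s0 + s + ?L / 2 - cum_len vs J) / edge_len vs J"
  have L: "?L > 0" by (rule perimeter_pos[OF convex])
  have eK: "edge_len vs K > 0" and eJ: "edge_len vs J > 0" using edge_len_pos[OF convex] by auto
  have J_eq: "J = K + (J - K)" using \<open>K \<le> J\<close> by simp
  have chord: "polygon_chord vs K (J - K) l m ?P ?P'"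
  proof
    show "0 \<le> l" "l \<le> 1" using K eK unfolding l_def by (simp_all add: field_simps cum_len_Suc)
    show "0 \<le> m" "m \<le> 1" using J eJ unfolding m_def by (simp_all add: field_simps cum_len_Suc)
    show "l \<le> m" if "J - K = 0"
    proof -
      have "J = K" using that \<open>K \<le> J\<close> by simp
      then show ?thesis using L eK unfolding l_def m_def by (simp add: divide_right_mono)
    qed
    show "?P = vtx vs K + l *\<^sub>R (vtx vs (Suc K) - vtx vs K)"
      unfolding l_def by (rule bdry_point_on_edge[OF convex K])
    show "?P' = vtx vs (K + (J - K)) + m *\<^sub>R (vtx vs (Suc (K + (J - K))) - vtx vs (K + (J - K)))"
      unfolding m_def J_eq[symmetric] by (rule bdry_point_on_edge[OF convex J])
  qed (use convex \<open>J \<le> K + ?n\<close> in auto)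
  have "m \<le> l" if "J - K = ?n"
  proof -
    have "J = K + ?n" using that \<open>K \<le> J\<close> by simp
    then have "m = (s0 + s - ?L / 2 - cum_len vs K) / edge_len vs K"
      unfolding m_def by (simp add: cum_len_add_length edge_len_mod_length[of vs "K + ?n", symmetric])
        (simp add: edge_len_mod_length algebra_simps)
    then show ?thesis unfolding l_def using eK L by (simp add: divide_right_mono)
  qed
  then show ?thesis
    using area_split_by_chord[OF chord] unfolding area_diff_def Let_def by auto
qed

subsection \<open>Zero sets of piecewise polynomial functions\<close>

lemma finite_set_gap_around:
  fixes B :: "real set"
  assumes "finite B" "b1 \<in> B" "b1 < x" "b2 \<in> B" "x < b2" "x \<notin> B"
  obtains c d where "c \<in> B" "d \<in> B" "c < x" "x < d" "\<And>y. c < y \<Longrightarrow> y < d \<Longrightarrow> y \<notin> B"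
proof -
  define c where "c = Max {b\<in>B. b < x}"
  define d where "d = Min {b\<in>B. x < b}"
  have fin: "finite {b\<in>B. b < x}" "finite {b\<in>B. x < b}" using assms(1) by auto
  have c: "c \<in> B" "c < x" "\<And>b. b \<in> B \<Longrightarrow> b < x \<Longrightarrow> b \<le> c"
    using Max_in[OF fin(1)] Max_ge[OF fin(1)] assms(2,3) unfolding c_def by auto
  have d: "d \<in> B" "x < d" "\<And>b. b \<in> B \<Longrightarrow> x < b \<Longrightarrow> d \<le> b"
    using Min_in[OF fin(2)] Min_le[OF fin(2)] assms(4,5) unfolding d_def by auto
  show thesis
  proof (rule that[OF c(1) d(1) c(2) d(2)])
    fix y assume "c < y" "y < d"
    then show "y \<notin> B" using c(3)[of y] d(3)[of y] assms(6) by (cases y x rule: linorder_cases) auto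
  qed
qed

lemma zero_set_piecewise:
  fixes f :: "real \<Rightarrow> real" and B :: "real set"
  assumes "finite B" and "lo \<le> hi"
    and piece: "\<And>c d. lo \<le> c \<Longrightarrow> c < d \<Longrightarrow> d \<le> hi \<Longrightarrow> (\<And>x. c < x \<Longrightarrow> x < d \<Longrightarrow> x \<notin> B) \<Longrightarrow>
        finite {x\<in>{c..d}. f x = 0} \<or> (\<forall>x\<in>{c..d}. f x = 0)"
  shows "\<exists>F I. finite F \<and> finite I \<and> (\<forall>(a, b)\<in>I. a \<le> b) \<and>
           {x \<in> {lo..hi}. f x = 0} = F \<union> (\<Union>(a, b)\<in>I. {a..b})"
proof -
  define B' where "B' = (B \<inter> {lo..hi}) \<union> {lo, hi}"
  define gaps where "gaps = {(c, d). c \<in> B' \<and> d \<in> B' \<and> c < d \<and> (\<forall>x. c < x \<and> x < d \<longrightarrow> x \<notin> B')}"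
  define Z where "Z = {x \<in> {lo..hi}. f x = 0}"
  define F where "F = (Z \<inter> B') \<union> (\<Union>(c, d)\<in>{(c, d)\<in>gaps. finite {x\<in>{c..d}. f x = 0}}. {x\<in>{c..d}. f x = 0})"
  define I where "I = {(c, d)\<in>gaps. \<forall>x\<in>{c..d}. f x = 0}"
  have "finite B'" unfolding B'_def using assms(1) by simp
  moreover have "gaps \<subseteq> B' \<times> B'" unfolding gaps_def by auto
  ultimately have "finite gaps" by (simp add: finite_subset)
  have gap: "lo \<le> c \<and> d \<le> hi \<and> (finite {x\<in>{c..d}. f x = 0} \<or> (\<forall>x\<in>{c..d}. f x = 0))"
    if "(c, d) \<in> gaps" for c d
  proof -
    have "c \<in> B'" "d \<in> B'" "c < d" "\<forall>x. c < x \<and> x < d \<longrightarrow> x \<notin> B'"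
      using that unfolding gaps_def by auto
    then show ?thesis using piece[of c d] assms(2) unfolding B'_def by auto
  qed
  have "Z \<subseteq> F \<union> (\<Union>(a, b)\<in>I. {a..b})"
  proof
    fix x assume x: "x \<in> Z"
    show "x \<in> F \<union> (\<Union>(a, b)\<in>I. {a..b})"
    proof (cases "x \<in> B'")
      case False
      have "lo < x" "x < hi" using x False unfolding Z_def B'_def by auto
      obtain c d where "c \<in> B'" "d \<in> B'" "c < x" "x < d" "\<And>y. c < y \<Longrightarrow> y < d \<Longrightarrow> y \<notin> B'"
        by (rule finite_set_gap_around[OF \<open>finite B'\<close>, of lo x hi])
          (use False \<open>lo < x\<close> \<open>x < hi\<close> in \<open>auto simp: B'_def\<close>)
      then have cd: "(c, d) \<in> gaps" "c < x" "x < d" unfolding gaps_def by auto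
      then have "x \<in> {x\<in>{c..d}. f x = 0}" using x unfolding Z_def by auto
      then show ?thesis using gap[OF cd(1)] cd unfolding F_def I_def by blast
    qed (use x in \<open>auto simp: F_def\<close>)
  qed
  moreover have "F \<union> (\<Union>(a, b)\<in>I. {a..b}) \<subseteq> Z"
    using gap unfolding F_def I_def Z_def by fastforce
  ultimately have "Z = F \<union> (\<Union>(a, b)\<in>I. {a..b})" by blast
  moreover have "finite {(c, d)\<in>gaps. finite {x\<in>{c..d}. f x = 0}}" "finite I"
    unfolding I_def by (rule rev_finite_subset[OF \<open>finite gaps\<close>]; auto)+
  then have "finite F" "finite I"
    unfolding F_def using \<open>finite B'\<close> by auto
  moreover have "\<forall>(a, b)\<in>I. a \<le> b" unfolding I_def gaps_def by auto
  ultimately show ?thesis unfolding Z_def by blast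
qed

lemma zero_set_finite_or_all:
  fixes a b :: "'a :: real_vector" and f :: "real \<Rightarrow> real"
  assumes "\<And>s. s \<in> S \<Longrightarrow> f s = (if a + s *\<^sub>R b = 0 then 0 else A + B * s + C * s^2)"
  shows "finite {s\<in>S. f s = 0} \<or> (\<forall>s\<in>S. f s = 0)"
proof -
  have affine: "finite {s. a + s *\<^sub>R b = 0} \<or> (\<forall>s. a + s *\<^sub>R b = 0)"
  proof (cases "b = 0 \<or> (\<nexists>s. a + s *\<^sub>R b = 0)")
    case False
    then obtain s0 where s0: "a + s0 *\<^sub>R b = 0" and "b \<noteq> 0" by blast
    have "s = s0" if "a + s *\<^sub>R b = 0" for s
    proof -
      have "s *\<^sub>R b = s0 *\<^sub>R b" using that s0 by (metis add_left_cancel)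
      then show ?thesis using \<open>b \<noteq> 0\<close> by simp
    qed
    then have "{s. a + s *\<^sub>R b = 0} \<subseteq> {s0}" by blast
    then show ?thesis using finite_subset by blast
  qed (cases "a = 0"; auto)
  have quadratic: "finite {s. A + B * s + C * s^2 = 0} \<or> (\<forall>s. A + B * s + C * s^2 = 0)"
  proof (cases "A = 0 \<and> B = 0 \<and> C = 0")
    case False
    define c where "c = (\<lambda>i::nat. if i = 0 then A else if i = 1 then B else C)"
    have "(\<Sum>i\<le>2. c i * s^i) = A + B * s + C * s^2" for s
      unfolding c_def by (simp add: numeral_2_eq_2)
    moreover have "c 0 \<noteq> 0 \<or> c 1 \<noteq> 0 \<or> c 2 \<noteq> 0" using False unfolding c_def by simp
    then have "\<exists>i\<le>2. c i \<noteq> 0" by (auto intro: exI[where x = 0] exI[where x = 1] exI[where x = 2])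
    ultimately show ?thesis using polyfun_finite_roots[of c 2] by simp
  qed simp
  have "{s\<in>S. f s = 0} \<subseteq> {s. a + s *\<^sub>R b = 0} \<union> {s. A + B * s + C * s^2 = 0}"
    using assms by (auto split: if_split_asm)
  then show ?thesis using affine quadratic assms by (auto intro: finite_subset)
qed

lemma arc_shoelace_affine_quadratic:
  "\<exists>A B C. \<forall>s. shoelace vs / 2 - arc_shoelace vs I d (a1 + s *\<^sub>R b1) (a2 + s *\<^sub>R b2)
      = A + B * s + C * s^2"
  by (rule exI[of _ "shoelace vs / 2 - arc_shoelace vs I d a1 a2"],
      rule exI[of _ "cross (vtx vs I) b1 - cross (vtx vs (I + d)) b2 - cross a2 b1 - cross b2 a1"],
      rule exI[of _ "- cross b2 b1"])
     (simp add: arc_shoelace_def algebra_simps power2_eq_square)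

subsection \<open>The zero set of the area difference\<close>

lemma chord_edges_between_breakpoints:
  assumes convex: "convex_polygon_vertices vs"
    and s0: "0 \<le> s0" "s0 < perimeter vs"
    and cd: "0 \<le> c" "c < d" "d \<le> perimeter vs"
    and no_vertex: "\<And>x. c < x \<Longrightarrow> x < d \<Longrightarrow>
       x \<notin> (\<lambda>K. cum_len vs K - s0) ` {..3 * length vs}
          \<union> (\<lambda>K. cum_len vs K - s0 - perimeter vs / 2) ` {..3 * length vs}"
  obtains K J where
    "cum_len vs K \<le> s0 + c" "s0 + d \<le> cum_len vs (Suc K)"
    "cum_len vs J \<le> s0 + c + perimeter vs / 2" "s0 + d + perimeter vs / 2 \<le> cum_len vs (Suc J)"
    "K \<le> J" "J \<le> K + length vs"
proof -
  let ?n = "length vs" and ?L = "perimeter vs"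
  have L: "?L > 0" by (rule perimeter_pos[OF convex])
  have mono: "strict_mono (cum_len vs)" by (rule cum_len_strict_mono[OF convex])
  \<comment> \<open>All arc-length parameters in question lie below s0 + d + L/2 < 3 L.\<close>
  have three_laps: "cum_len vs (3 * ?n) = 3 * ?L" using cum_len_add_mult_length[of vs 0 3] by simp
  have no_vertex': "cum_len vs K \<notin> {s0 + c<..<s0 + d}"
    "cum_len vs K \<notin> {s0 + c + ?L / 2<..<s0 + d + ?L / 2}" if "K \<le> 3 * ?n" for K
    using no_vertex[of "cum_len vs K - s0"] no_vertex[of "cum_len vs K - s0 - ?L / 2"] that by auto
  obtain K where K: "cum_len vs K \<le> s0 + c" "s0 + d \<le> cum_len vs (Suc K)"
    by (rule interval_within_edge[of "s0 + c" "s0 + d" vs "3 * ?n"])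
      (use s0 cd L three_laps no_vertex' in auto)
  obtain J where J: "cum_len vs J \<le> s0 + c + ?L / 2" "s0 + d + ?L / 2 \<le> cum_len vs (Suc J)"
    by (rule interval_within_edge[of "s0 + c + ?L / 2" "s0 + d + ?L / 2" vs "3 * ?n"])
      (use s0 cd L three_laps no_vertex' in auto)
  have "cum_len vs K < cum_len vs (Suc J)" using K J cd L by linarith
  then have "K \<le> J" using strict_mono_less[OF mono] by fastforce
  have "cum_len vs J < cum_len vs (Suc K + ?n)" using K J cd cum_len_add_length[of vs "Suc K"] by linarith
  then have "J \<le> K + ?n" using strict_mono_less[OF mono] by fastforce
  show thesis using that K J \<open>K \<le> J\<close> \<open>J \<le> K + ?n\<close> by blast
qed

lemma area_diff_between_breakpoints:
  assumes convex: "convex_polygon_vertices vs"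
    and s0: "0 \<le> s0" "s0 < perimeter vs"
    and cd: "0 \<le> c" "c < d" "d \<le> perimeter vs"
    and no_vertex: "\<And>x. c < x \<Longrightarrow> x < d \<Longrightarrow>
       x \<notin> (\<lambda>K. cum_len vs K - s0) ` {..3 * length vs}
          \<union> (\<lambda>K. cum_len vs K - s0 - perimeter vs / 2) ` {..3 * length vs}"
  shows "finite {s\<in>{c..d}. area_diff vs s0 s = 0} \<or> (\<forall>s\<in>{c..d}. area_diff vs s0 s = 0)"
proof -
  let ?L = "perimeter vs"
  let ?P = "\<lambda>s. bdry_point vs (s0 + s)" and ?P' = "\<lambda>s. bdry_point vs (s0 + s + ?L / 2)"
  obtain K J where K: "cum_len vs K \<le> s0 + c" "s0 + d \<le> cum_len vs (Suc K)"
    and J: "cum_len vs J \<le> s0 + c + ?L / 2" "s0 + d + ?L / 2 \<le> cum_len vs (Suc J)"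
    and KJ: "K \<le> J" "J \<le> K + length vs"
    using chord_edges_between_breakpoints[OF assms] by blast
  obtain a1 b1 where edge_K: "\<forall>u\<in>{cum_len vs K..cum_len vs (Suc K)}. bdry_point vs u = a1 + u *\<^sub>R b1"
    using bdry_point_affine_on_edge[OF convex] by blast
  obtain a2 b2 where edge_J: "\<forall>u\<in>{cum_len vs J..cum_len vs (Suc J)}. bdry_point vs u = a2 + u *\<^sub>R b2"
    using bdry_point_affine_on_edge[OF convex] by blast
  have P: "?P s = (a1 + s0 *\<^sub>R b1) + s *\<^sub>R b1" if "s \<in> {c..d}" for s
    using edge_K[rule_format, of "s0 + s"] that K by (simp add: algebra_simps)
  have P': "?P' s = (a2 + (s0 + ?L / 2) *\<^sub>R b2) + s *\<^sub>R b2" if "s \<in> {c..d}" for s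
    using edge_J[rule_format, of "s0 + s + ?L / 2"] that J by (simp add: algebra_simps)
  obtain A B C where quadratic: "\<And>s. shoelace vs / 2 - arc_shoelace vs K (J - K)
      ((a1 + s0 *\<^sub>R b1) + s *\<^sub>R b1) ((a2 + (s0 + ?L / 2) *\<^sub>R b2) + s *\<^sub>R b2) = A + B * s + C * s^2"
    using arc_shoelace_affine_quadratic by blast
  show ?thesis
  proof (rule zero_set_finite_or_all)
    fix s assume s: "s \<in> {c..d}"
    have "area_diff vs s0 s
        = (if ?P s = ?P' s then 0 else shoelace vs / 2 - arc_shoelace vs K (J - K) (?P s) (?P' s))"
      using area_diff_on_edges[OF convex _ _ _ _ KJ] K J s by (simp add: Let_def)
    also have "\<dots> = (if ((a1 + s0 *\<^sub>R b1) - (a2 + (s0 + ?L / 2) *\<^sub>R b2)) + s *\<^sub>R (b1 - b2) = 0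
        then 0 else A + B * s + C * s^2)"
      unfolding P[OF s] P'[OF s] quadratic by (simp add: algebra_simps)
    finally show "area_diff vs s0 s = \<dots>" .
  qed
qed

theorem lemma2:
  fixes vs :: "(real^2) list" and s0 :: real
  assumes "convex_polygon_vertices vs"
  shows "\<exists>F I. finite F \<and> finite I \<and> (\<forall>(a, b) \<in> I. a \<le> b) \<and>
           {s \<in> {0..perimeter vs}. area_diff vs s0 s = 0}
             = F \<union> (\<Union>(a, b) \<in> I. {a..b})"
proof -
  let ?L = "perimeter vs" and ?n = "length vs"
  have L: "?L > 0" by (rule perimeter_pos[OF assms])
  define s1 where "s1 = frac (s0 / ?L) * ?L"
  have s0_eq: "s0 = s1 + of_int \<lfloor>s0 / ?L\<rfloor> * ?L"
    using L unfolding s1_def frac_def by (simp add: field_simps)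
  have s1: "0 \<le> s1" "s1 < ?L"
    using L frac_ge_0[of "s0 / ?L"] frac_lt_1[of "s0 / ?L"] unfolding s1_def by simp_all
  define B where
    "B = (\<lambda>K. cum_len vs K - s1) ` {..3 * ?n} \<union> (\<lambda>K. cum_len vs K - s1 - ?L / 2) ` {..3 * ?n}"
  have "\<exists>F I. finite F \<and> finite I \<and> (\<forall>(a, b)\<in>I. a \<le> b) \<and>
      {s \<in> {0..?L}. area_diff vs s1 s = 0} = F \<union> (\<Union>(a, b)\<in>I. {a..b})"
  proof (rule zero_set_piecewise)
    fix c d assume "0 \<le> c" "c < d" "d \<le> ?L" "\<And>x. c < x \<Longrightarrow> x < d \<Longrightarrow> x \<notin> B"
    then show "finite {x\<in>{c..d}. area_diff vs s1 x = 0} \<or> (\<forall>x\<in>{c..d}. area_diff vs s1 x = 0)"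
      unfolding B_def by (intro area_diff_between_breakpoints[OF assms s1])
  qed (use L in \<open>simp_all add: B_def\<close>)
  then show ?thesis using area_diff_periodic[OF assms, of s1 "\<lfloor>s0 / ?L\<rfloor>"] s0_eq by simp
qed

end
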